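(* Let $\mathbf{H}_{\mathrm{SC}}$, $L_2$, $d$, the MD mapping $M$ and the matrix $\mathbf{H}^{\mathrm{MD}}_{\mathrm{SC}}$ be as in the context. Let $e_1,e_2,\dots,e_k$ be the edges, listed in traversal order, of a cycle of length $k$ in the Tanner graph of $\mathbf{H}_{\mathrm{SC}}$, labeled so that $e_u$ and $e_{u+1}$ share a check node (row) when $u$ is odd and share a variable node (column) when $u$ is even, where indices are taken cyclically ($e_{k+1}=e_1$). Define $$\Delta=\Big(-\sum_{u=1}^{k}(-1)^u M(e_u)\Big) \bmod L_2\in\{0,\dots,L_2-1\},\qquad \tau=\gcd(L_2,\Delta),$$ with the convention $\gcd(L_2,0)=L_2$. Then the subgraph of the Tanner graph of $\mathbf{H}^{\mathrm{MD}}_{\mathrm{SC}}$ formed by the $L_2k$ lifted edges $e_u^{(a)}$, $1\le u\le k$, $a\in\mathbb{Z}_{L_2}$, together with their endpoints, is a vertex-disjoint union of exactly $\tau$ cycles, each of length $L_2k/\tau$.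
   Context: $\mathbf{H}_{\mathrm{SC}}$ is a binary matrix partitioned into $z\times z$ blocks called circulants; each block is either the zero matrix or a cyclic shift of the $z\times z$ identity matrix (a nonzero circulant). Its Tanner graph has one variable node per column, one check node per row, and an edge $(r,c)$ for each entry $\mathbf{H}_{\mathrm{SC}}(r,c)=1$; each edge lies in exactly one nonzero circulant. Fix integers $1\le d\le L_2$. An MD mapping $M$ assigns to each nonzero circulant an integer in $\{0,1,\dots,d-1\}$; for an edge $e$ write $M(e)$ for the value of $M$ on the circulant containing $e$. (Equivalently, $\mathbf{H}_{\mathrm{SC}}=\mathbf{H}'_{\mathrm{SC}}+\sum_{t=1}^{d-1}\mathbf{A}_t$, where $\mathbf{A}_t$ keeps exactly the circulants with $M=t$ and $\mathbf{H}'_{\mathrm{SC}}$ those with $M=0$.) The MD-SC matrix $\mathbf{H}^{\mathrm{MD}}_{\mathrm{SC}}$ is the $L_2\times L_2$ block matrix whose block (segment) $\mathbf{S}_{a,b}$, $a,b\in\mathbb{Z}_{L_2}$, equals $\mathbf{H}'_{\mathrm{SC}}$ if $a=b$, equals $\mathbf{A}_t$ if $a-b\equiv t \pmod{L_2}$ with $1\le t\le d-1$, and is zero otherwise. Thus its rows are indexed by pairs $(a,r)$ and columns by pairs $(b,c)$, and the entry at $((a,r),(b,c))$ is $1$ iff $\mathbf{H}_{\mathrm{SC}}(r,c)=1$ and $a-b\equiv M((r,c))\pmod{L_2}$. For an edge $e=(r,c)$ of $\mathbf{H}_{\mathrm{SC}}$ and $a\in\mathbb{Z}_{L_2}$, its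 lifted edge $e^{(a)}$ is the edge of the Tanner graph of $\mathbf{H}^{\mathrm{MD}}_{\mathrm{SC}}$ joining variable node $(a,c)$ and check node $((a+M(e))\bmod L_2, r)$. A cycle of length $k$ in a Tanner graph is a closed path with $k$ distinct edges and no repeated vertices. *)

theory Defs
  imports Main
begin

text \<open>The binary matrix H_SC is a function on (row, column) indices (True = entry 1),
 of size (nr*z) x (nc*z), partitioned into z x z circulant blocks.\<close>

definition circulant_structured :: "(nat \<Rightarrow> nat \<Rightarrow> bool) \<Rightarrow> nat \<Rightarrow> nat \<Rightarrow> nat \<Rightarrow> bool" where
  "circulant_structured H nr nc z \<longleftrightarrow>
     z \<ge> 1 \<and>
     (\<forall>r c. H r c \<longrightarrow> r < nr * z \<and> c < nc * z) \<and>
     (\<forall>i<nr. \<forall>j<nc.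
        (\<forall>p<z. \<forall>q<z. \<not> H (i*z+p) (j*z+q)) \<or>
        (\<exists>s<z. \<forall>p<z. \<forall>q<z. H (i*z+p) (j*z+q) \<longleftrightarrow> q = (p + s) mod z))"

definition nonzero_circulant :: "(nat \<Rightarrow> nat \<Rightarrow> bool) \<Rightarrow> nat \<Rightarrow> nat \<Rightarrow> nat \<Rightarrow> bool" where
  "nonzero_circulant H z i j \<longleftrightarrow> (\<exists>p<z. \<exists>q<z. H (i*z+p) (j*z+q))"

definition md_mapping :: "(nat \<Rightarrow> nat \<Rightarrow> bool) \<Rightarrow> nat \<Rightarrow> nat \<Rightarrow> nat \<Rightarrow> nat \<Rightarrow> (nat \<Rightarrow> nat \<Rightarrow> nat) \<Rightarrow> bool" where
  "md_mapping H nr nc z d M \<longleftrightarrow>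
     (\<forall>i<nr. \<forall>j<nc. nonzero_circulant H z i j \<longrightarrow> M i j < d)"

definition Medge :: "nat \<Rightarrow> (nat \<Rightarrow> nat \<Rightarrow> nat) \<Rightarrow> nat \<times> nat \<Rightarrow> nat" where
  "Medge z M e = M (fst e div z) (snd e div z)"

definition md_matrix :: "(nat \<Rightarrow> nat \<Rightarrow> bool) \<Rightarrow> nat \<Rightarrow> (nat \<Rightarrow> nat \<Rightarrow> nat) \<Rightarrow> nat
     \<Rightarrow> nat \<times> nat \<Rightarrow> nat \<times> nat \<Rightarrow> bool" where
  "md_matrix H z M L2 ar bc \<longleftrightarrow>
     (case ar of (a, r) \<Rightarrow> case bc of (b, c) \<Rightarrow>
        a < L2 \<and> b < L2 \<and> H r c \<and>
        (int a - int b) mod int L2 = int (Medge z M (r, c)) mod int L2)"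

text \<open>Edges of the Tanner graph of a matrix: pairs (check node = row, variable node = column).\<close>
definition tanner_edges :: "('r \<Rightarrow> 'c \<Rightarrow> bool) \<Rightarrow> ('r \<times> 'c) set" where
  "tanner_edges A = {(r, c). A r c}"

definition endpoints :: "'r \<times> 'c \<Rightarrow> ('r + 'c) set" where
  "endpoints e = {Inl (fst e), Inr (snd e)}"

definition is_cycle :: "('r \<times> 'c) set \<Rightarrow> ('r \<times> 'c) list \<Rightarrow> bool" where
  "is_cycle E es \<longleftrightarrow> length es > 0 \<and> distinct es \<and> set es \<subseteq> E \<and>
     (\<exists>vs. length vs = length es \<and> distinct vs \<and>
        (\<forall>i<length es. endpoints (es ! i) = {vs ! i, vs ! ((i + 1) mod length es)}))"

definition lift_edge :: "nat \<Rightarrow> (nat \<Rightarrow> nat \<Rightarrow> nat) \<Rightarrow> nat \<Rightarrow> nat \<times> nat \<Rightarrow> nat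
     \<Rightarrow> (nat \<times> nat) \<times> (nat \<times> nat)" where
  "lift_edge z M L2 e a = (((a + Medge z M e) mod L2, fst e), (a, snd e))"

end

theory Submission
  imports Defs
begin

text \<open>
  In a cycle e_0, ..., e_(k-1) whose consecutive edges alternately share a check node and a
  variable node, the vertices are forced: the i-th vertex is the row of e_i for odd i and the
  column of e_i for even i, so k is even and rows at odd positions, as well as columns at even
  positions, are pairwise distinct. Following the lift of the cycle that starts at the variable
  node (a, c_0), one full turn around the base cycle returns to the same variable node with
  index shifted by the alternating sum P of the values of M. The lifted edges therefore
  decompose into closed walks indexed by the cosets of the subgroup of Z_L2 generated by P; with
  g = gcd L2 P there are g of them, each winding L2/g times around the base cycle. That this
  parametrisation is bijective amounts to (a, q) \<mapsto> a + q P being a bijection from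
  [0, g) \<times> [0, L2/g) onto Z_L2.
\<close>

lemma int_dvd_abs_less_imp_zero:
  assumes "(d :: int) dvd x" "\<bar>x\<bar> < d" shows "x = 0"
proof (rule ccontr)
  assume "x \<noteq> 0"
  with assms(1) have "\<bar>d\<bar> \<le> \<bar>x\<bar>" by (rule dvd_imp_le_int[rotated])
  with assms(2) show False by linarith
qed

lemma mod_add_right_cancel_int: "((x :: int) + c) mod n = (y + c) mod n \<Longrightarrow> x mod n = y mod n"
  by (metis add_diff_cancel_right' mod_diff_left_eq)

lemma mod_add_right_inj_less:
  fixes x y m L :: nat
  assumes "x < L" "y < L" "(x + m) mod L = (y + m) mod L"
  shows "x = y"
proof -
  have "(int x + int m) mod int L = (int y + int m) mod int L"
    using arg_cong[OF assms(3), of int] by (simp add: of_nat_mod)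
  then have "int L dvd int x - int y" by (simp add: mod_eq_dvd_iff)
  moreover have "\<bar>int x - int y\<bar> < int L" using assms(1,2) by linarith
  ultimately show ?thesis using int_dvd_abs_less_imp_zero by fastforce
qed

lemma gcd_decomposition_inj:
  fixes L a a' q q' :: nat and P :: int
  defines "g \<equiv> nat (gcd (int L) P)"
  assumes "0 < L" and "a < g" "a' < g" and "q < L div g" "q' < L div g"
    and "(int a + int q * P) mod int L = (int a' + int q' * P) mod int L"
  shows "a = a' \<and> q = q'"
proof -
  define G where "G = gcd (int L) P"
  have G: "0 < G" "G dvd int L" "G dvd P" "int g = G"
    using assms(2) by (simp_all add: G_def g_def)
  have L_dvd: "int L dvd (int a - int a') + (int q - int q') * P"
    using assms(7) by (simp add: mod_eq_dvd_iff algebra_simps)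
  then have "G dvd (int a - int a') + (int q - int q') * P"
    using G(2) by (rule dvd_trans[rotated])
  then have "G dvd int a - int a'"
    using G(3) by (simp add: dvd_add_left_iff)
  moreover have "\<bar>int a - int a'\<bar> < G" using assms(3,4) G(4) by linarith
  ultimately have a: "a = a'" using int_dvd_abs_less_imp_zero by fastforce
  with L_dvd have "int L div G * G dvd (int q - int q') * (P div G) * G"
    using G(2,3) by (simp add: mult.assoc)
  then have "int L div G dvd (int q - int q') * (P div G)"
    using G(1) by (simp only: dvd_mult_cancel_right) simp
  moreover have "coprime (int L div G) (P div G)"
    using assms(2) by (simp add: G_def div_gcd_coprime)
  ultimately have "int L div G dvd int q - int q'" by (simp add: coprime_dvd_mult_left_iff)
  moreover have "int (L div g) = int L div G" using G(4) by (simp add: zdiv_int)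
  then have "\<bar>int q - int q'\<bar> < int L div G" using assms(5,6) by linarith
  ultimately have "q = q'" using int_dvd_abs_less_imp_zero by fastforce
  with a show ?thesis ..
qed

lemma gcd_decomposition_bij:
  fixes L :: nat and P :: int
  defines "g \<equiv> nat (gcd (int L) P)"
  assumes "0 < L"
  shows "bij_betw (\<lambda>(a, q). (int a + int q * P) mod int L) ({..<g} \<times> {..<L div g}) {0..<int L}"
proof -
  let ?f = "\<lambda>(a, q). (int a + int q * P) mod int L"
  have inj: "inj_on ?f ({..<g} \<times> {..<L div g})"
  proof (rule inj_onI)
    fix x y assume x: "x \<in> {..<g} \<times> {..<L div g}" and y: "y \<in> {..<g} \<times> {..<L div g}"
      and eq: "?f x = ?f y"
    obtain a q a' q' where "x = (a, q)" "y = (a', q')" by fastforce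
    with x y eq show "x = y"
      using gcd_decomposition_inj[OF assms(2), where a=a and a'=a' and q=q and q'=q' and P=P]
      by (simp add: g_def)
  qed
  have "int g dvd int L" using assms by (simp add: g_def)
  then have "g dvd L" by (simp only: int_dvd_int_iff)
  then have "card ({..<g} \<times> {..<L div g}) = card {0..<int L}" by simp
  with inj have "card (?f ` ({..<g} \<times> {..<L div g})) = card {0..<int L}"
    by (simp add: card_image)
  moreover have "?f ` ({..<g} \<times> {..<L div g}) \<subseteq> {0..<int L}" using assms by auto
  ultimately show ?thesis using inj by (simp add: bij_betw_def card_subset_eq)
qed

lemma endpoints_inj: "endpoints e = endpoints e' \<Longrightarrow> e = e'"
  by (cases e; cases e') (auto simp: endpoints_def doubleton_eq_iff)

lemma endpoints_lift_edge:
  "endpoints (lift_edge z M L e x) = {Inl ((x + Medge z M e) mod L, fst e), Inr (x, snd e)}"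
  by (simp add: endpoints_def lift_edge_def)

lemma lift_edge_inj: "lift_edge z M L e x = lift_edge z M L e' x' \<Longrightarrow> e = e' \<and> x = x'"
  by (cases e; cases e') (simp add: lift_edge_def)

lemma lift_edge_in_tanner_md_matrix:
  assumes "H r c" "x < L"
  shows "lift_edge z M L (r, c) x \<in> tanner_edges (md_matrix H z M L)"
proof -
  let ?m = "Medge z M (r, c)"
  have "(int ((x + ?m) mod L) - int x) mod int L = (int x + int ?m - int x) mod int L"
    by (simp add: of_nat_mod mod_diff_left_eq)
  then have "(int ((x + ?m) mod L) - int x) mod int L = int ?m mod int L" by simp
  with assms show ?thesis
    by (simp add: tanner_edges_def lift_edge_def md_matrix_def)
qed

lemma middle_of_consecutive_pairs:
  assumes "3 \<le> length vs" "distinct vs" "i < length vs"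
    and "x \<in> {vs ! i, vs ! ((i + 1) mod length vs)}"
    and "x \<in> {vs ! ((i + 1) mod length vs), vs ! ((i + 2) mod length vs)}"
  shows "x = vs ! ((i + 1) mod length vs)"
proof (rule ccontr)
  assume "x \<noteq> vs ! ((i + 1) mod length vs)"
  with assms(4,5) have "vs ! i = vs ! ((i + 2) mod length vs)" by auto
  moreover have "i \<noteq> (i + 2) mod length vs"
    using assms(1,3) by (cases "i + 2 < length vs") (auto simp: mod_if)
  moreover have "(i + 2) mod length vs < length vs" using assms(1) by (intro mod_less_divisor) linarith
  ultimately show False using nth_eq_iff_index_eq[OF assms(2,3)] by blast
qed

lemma is_cycle_of_closed_walk:
  assumes "0 < n" "inj_on w {..<n}" "w n = w 0" "inj_on f {..<n}" "f ` {..<n} \<subseteq> E"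
    and "\<And>j. j < n \<Longrightarrow> endpoints (f j) = {w j, w (Suc j)}"
  shows "is_cycle E (map f [0..<n])"
proof -
  have "endpoints (f i) = {w i, w ((i + 1) mod n)}" if "i < n" for i
    using that assms(3,6) by (cases "Suc i = n") auto
  then show ?thesis
    unfolding is_cycle_def
    by (intro conjI exI[of _ "map w [0..<n]"])
      (use assms in \<open>simp_all add: distinct_map atLeast0LessThan\<close>)
qed

locale alternating_cycle =
  fixes E :: "('r \<times> 'c) set" and es :: "('r \<times> 'c) list"
  assumes cycle: "is_cycle E es"
    and alternating: "\<forall>i<length es. if even i then fst (es ! i) = fst (es ! ((i + 1) mod length es))
                                   else snd (es ! i) = snd (es ! ((i + 1) mod length es))"
begin

abbreviation "k \<equiv> length es"

definition verts :: "('r + 'c) list" where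
  "verts = (SOME vs. length vs = k \<and> distinct vs \<and>
                     (\<forall>i<k. endpoints (es ! i) = {vs ! i, vs ! ((i + 1) mod k)}))"

lemma verts: "length verts = k" "distinct verts"
  "i < k \<Longrightarrow> endpoints (es ! i) = {verts ! i, verts ! ((i + 1) mod k)}"
proof -
  from cycle have "\<exists>vs. length vs = k \<and> distinct vs \<and>
                     (\<forall>i<k. endpoints (es ! i) = {vs ! i, vs ! ((i + 1) mod k)})"
    by (simp add: is_cycle_def)
  from someI_ex[OF this] show "length verts = k" "distinct verts"
    "i < k \<Longrightarrow> endpoints (es ! i) = {verts ! i, verts ! ((i + 1) mod k)}"
    unfolding verts_def by blast+
qed

lemma length_pos: "0 < k"
  using cycle by (simp add: is_cycle_def)

lemma distinct_edges: "distinct es"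
  using cycle by (simp add: is_cycle_def)

lemma length_ge_3: "3 \<le> k"
proof -
  have ends: "Inl (fst (es ! 0)) \<in> endpoints (es ! 0)" "Inr (snd (es ! 0)) \<in> endpoints (es ! 0)"
    by (simp_all add: endpoints_def)
  have "k \<noteq> 1"
  proof
    assume "k = 1"
    then have "endpoints (es ! 0) = {verts ! 0}" using verts(3)[of 0] by simp
    with ends have "Inl (fst (es ! 0)) = Inr (snd (es ! 0))" by simp
    then show False by simp
  qed
  moreover have "k \<noteq> 2"
  proof
    assume k2: "k = 2"
    then have "endpoints (es ! 0) = endpoints (es ! 1)"
      using verts(3)[of 0] verts(3)[of 1] by (simp add: insert_commute)
    then have "es ! 0 = es ! 1" by (rule endpoints_inj)
    with k2 show False using nth_eq_iff_index_eq[OF distinct_edges, of 0 1] by simp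
  qed
  ultimately show ?thesis using length_pos by linarith
qed

definition shared_node :: "nat \<Rightarrow> 'r + 'c" where
  "shared_node i = (if even i then Inl (fst (es ! i)) else Inr (snd (es ! i)))"

lemma shared_node_eq_next:
  assumes "i < k"
  shows "shared_node i =
    (if even i then Inl (fst (es ! ((i + 1) mod k))) else Inr (snd (es ! ((i + 1) mod k))))"
proof -
  have "if even i then fst (es ! i) = fst (es ! ((i + 1) mod k))
        else snd (es ! i) = snd (es ! ((i + 1) mod k))"
    using alternating assms by blast
  then show ?thesis by (simp add: shared_node_def split: if_splits)
qed

lemma verts_Suc_eq_shared_node:
  assumes "i < k" shows "verts ! ((i + 1) mod k) = shared_node i"
proof -
  have "(i + 1) mod k < k" "((i + 1) mod k + 1) mod k = (i + 2) mod k"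
    using length_pos by (simp_all add: mod_Suc_eq)
  then have "endpoints (es ! ((i + 1) mod k)) = {verts ! ((i + 1) mod k), verts ! ((i + 2) mod k)}"
    using verts(3) by metis
  moreover have "shared_node i \<in> endpoints (es ! i)"
    "shared_node i \<in> endpoints (es ! ((i + 1) mod k))"
    using shared_node_eq_next[OF assms]
    by (simp_all add: shared_node_def endpoints_def split: if_splits)
  ultimately show ?thesis
    using middle_of_consecutive_pairs[of verts i "shared_node i"] verts(1,2) verts(3)[OF assms]
      length_ge_3 assms
    by simp
qed

lemma even_length: "even k"
proof (rule ccontr)
  assume "odd k"
  then have "shared_node (k - 1) = shared_node 0"
    using shared_node_eq_next[of "k - 1"] length_pos by (simp add: shared_node_def)
  then have "verts ! 0 = verts ! 1"
    using verts_Suc_eq_shared_node[of "k - 1"] verts_Suc_eq_shared_node[of 0] length_pos length_ge_3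
    by simp
  moreover have "0 < length verts" "1 < length verts" using verts(1) length_ge_3 by linarith+
  ultimately show False using nth_eq_iff_index_eq[OF verts(2), of 0 1] by simp
qed

lemma verts_nth:
  assumes "i < k" shows "verts ! i = (if odd i then Inl (fst (es ! i)) else Inr (snd (es ! i)))"
proof -
  define h where "h = (if i = 0 then k - 1 else i - 1)"
  have h: "h < k" "(h + 1) mod k = i" "even h \<longleftrightarrow> odd i"
    using assms length_pos even_length by (auto simp: h_def)
  have "verts ! i = shared_node h" using verts_Suc_eq_shared_node[OF h(1)] h(2) by simp
  then show ?thesis using shared_node_eq_next[OF h(1)] h(2,3) by simp
qed

lemma rows_at_odd_positions_inj:
  "\<lbrakk>i < k; i' < k; odd i; odd i'; fst (es ! i) = fst (es ! i')\<rbrakk> \<Longrightarrow> i = i'"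
  using verts_nth[of i] verts_nth[of i'] nth_eq_iff_index_eq[OF verts(2), of i i'] verts(1) by simp

lemma columns_at_even_positions_inj:
  "\<lbrakk>i < k; i' < k; even i; even i'; snd (es ! i) = snd (es ! i')\<rbrakk> \<Longrightarrow> i = i'"
  using verts_nth[of i] verts_nth[of i'] nth_eq_iff_index_eq[OF verts(2), of i i'] verts(1) by simp

lemma even_mod_length: "even (j mod k) \<longleftrightarrow> even j"
  using even_length by (simp add: even_iff_mod_2_eq_zero mod_mod_cancel)

end

text \<open>
  The
  offset makes consecutive lifted edges meet: after an even step they share the check node,
  i.e. index plus voltage is preserved, after an odd step they share the variable node, i.e.
  the index is preserved.
\<close>

locale lifted_alternating_cycle = alternating_cycle E es
  for E :: "(nat \<times> nat) set" and es :: "(nat \<times> nat) list" +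
  fixes z :: nat and M :: "nat \<Rightarrow> nat \<Rightarrow> nat" and L :: nat
  assumes L_pos: "0 < L"
begin

definition step_edge :: "nat \<Rightarrow> nat \<times> nat" where
  "step_edge j = es ! (j mod k)"

definition voltage :: "nat \<Rightarrow> int" where
  "voltage j = int (Medge z M (step_edge j))"

definition alt_sum :: "nat \<Rightarrow> int" where
  "alt_sum n = (\<Sum>t<n. (-1) ^ t * voltage t)"

definition net_voltage :: int where
  "net_voltage = alt_sum k"

definition offset :: "nat \<Rightarrow> int" where
  "offset j = alt_sum j - (if odd j then voltage j else 0)"

definition num_cycles :: nat where
  "num_cycles = nat (gcd (int L) net_voltage)"

definition cycle_length :: nat where
  "cycle_length = L div num_cycles * k"

definition lift_index :: "nat \<Rightarrow> nat \<Rightarrow> nat" where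
  "lift_index a j = nat ((int a + offset j) mod int L)"

definition walk_edge :: "nat \<Rightarrow> nat \<Rightarrow> (nat \<times> nat) \<times> (nat \<times> nat)" where
  "walk_edge a j = lift_edge z M L (step_edge j) (lift_index a j)"

definition walk_vertex :: "nat \<Rightarrow> nat \<Rightarrow> (nat \<times> nat) + (nat \<times> nat)" where
  "walk_vertex a j =
     (if odd j then Inl ((lift_index a j + Medge z M (step_edge j)) mod L, fst (step_edge j))
      else Inr (lift_index a j, snd (step_edge j)))"

definition lifted_cycle :: "nat \<Rightarrow> ((nat \<times> nat) \<times> (nat \<times> nat)) list" where
  "lifted_cycle a = map (walk_edge a) [0..<cycle_length]"

definition lifted_edges :: "((nat \<times> nat) \<times> (nat \<times> nat)) set" where
  "lifted_edges = {lift_edge z M L e x | e x. e \<in> set es \<and> x < L}"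

lemma step_edge_add_periods: "step_edge (j + q * k) = step_edge j"
  by (simp add: step_edge_def)

lemma step_edge_alternating:
  "even j \<Longrightarrow> fst (step_edge (Suc j)) = fst (step_edge j)"
  "odd j \<Longrightarrow> snd (step_edge (Suc j)) = snd (step_edge j)"
  using alternating[rule_format, of "j mod k"] length_pos even_length
  by (auto simp: step_edge_def mod_Suc_eq even_mod_length)

lemma step_edge_eq_imp_mod_eq:
  assumes "step_edge j = step_edge j'" shows "j mod k = j' mod k"
  using assms nth_eq_iff_index_eq[OF distinct_edges] length_pos by (simp add: step_edge_def)

lemma voltage_add_periods: "voltage (j + q * k) = voltage j"
  by (simp add: voltage_def step_edge_add_periods)

lemma net_voltage_eq_sum: "net_voltage = (\<Sum>i<k. (-1) ^ i * int (Medge z M (es ! i)))"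
  unfolding net_voltage_def alt_sum_def voltage_def step_edge_def by simp

lemma alt_sum_add_period: "alt_sum (n + k) = alt_sum n + net_voltage"
proof (induction n)
  case 0 then show ?case by (simp add: net_voltage_def alt_sum_def)
next
  case (Suc n)
  have "alt_sum (Suc n + k) = alt_sum (n + k) + (-1) ^ (n + k) * voltage (n + k)"
    by (simp add: alt_sum_def)
  also have "\<dots> = alt_sum n + (-1) ^ n * voltage n + net_voltage"
    using Suc.IH voltage_add_periods[of n 1] even_length by (simp add: power_add)
  also have "\<dots> = alt_sum (Suc n) + net_voltage" by (simp add: alt_sum_def)
  finally show ?case .
qed

lemma alt_sum_add_periods: "alt_sum (n + q * k) = alt_sum n + int q * net_voltage"
proof (induction q)
  case (Suc q)
  have "n + Suc q * k = n + q * k + k" by simp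
  then have "alt_sum (n + Suc q * k) = alt_sum (n + q * k) + net_voltage"
    by (simp only: alt_sum_add_period)
  with Suc.IH show ?case by (simp add: algebra_simps)
qed simp

lemma offset_add_periods: "offset (j + q * k) = offset j + int q * net_voltage"
  using even_length by (simp add: offset_def alt_sum_add_periods voltage_add_periods)

lemma offset_decompose: "offset j = offset (j mod k) + int (j div k) * net_voltage"
  using offset_add_periods[of "j mod k" "j div k"] by simp

lemma offset_Suc_even: "even j \<Longrightarrow> offset (Suc j) + voltage (Suc j) = offset j + voltage j"
  by (simp add: offset_def alt_sum_def)

lemma offset_Suc_odd: "odd j \<Longrightarrow> offset (Suc j) = offset j"
  by (simp add: offset_def alt_sum_def)

lemma int_num_cycles: "int num_cycles = gcd (int L) net_voltage"
  by (simp add: num_cycles_def)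

lemma num_cycles_eq_gcd_mod: "num_cycles = nat (gcd (int L) (net_voltage mod int L))"
  by (metis gcd.commute gcd_red_int num_cycles_def)

lemma num_cycles_pos: "0 < num_cycles"
  using L_pos by (simp add: num_cycles_def)

lemma num_cycles_dvd: "num_cycles dvd L"
proof -
  have "int num_cycles dvd int L" by (simp add: int_num_cycles)
  then show ?thesis by (simp only: int_dvd_int_iff)
qed

lemma cycle_length_pos: "0 < cycle_length"
  using num_cycles_dvd num_cycles_pos L_pos length_pos
  by (simp add: cycle_length_def div_greater_zero_iff dvd_imp_le)

lemma cycle_length_eq: "cycle_length = L * k div num_cycles"
  using num_cycles_dvd by (simp add: cycle_length_def div_mult_swap mult.commute)

lemma dvd_net_voltage_period: "int L dvd int (L div num_cycles) * net_voltage"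
proof -
  have "int (L div num_cycles) * int num_cycles = int L"
    using num_cycles_dvd by (simp flip: of_nat_mult)
  moreover have "int num_cycles * (net_voltage div int num_cycles) = net_voltage"
    by (simp add: int_num_cycles)
  ultimately have "int (L div num_cycles) * net_voltage = int L * (net_voltage div int num_cycles)"
    by (metis mult.assoc)
  then show ?thesis by simp
qed

lemma int_lift_index: "int (lift_index a j) = (int a + offset j) mod int L"
  using L_pos by (simp add: lift_index_def)

lemma lift_index_less: "lift_index a j < L"
  using L_pos by (simp add: lift_index_def nat_less_iff)

lemma int_check_index:
  "int ((lift_index a j + Medge z M (step_edge j)) mod L) = (int a + offset j + voltage j) mod int L"
  by (simp add: of_nat_mod int_lift_index voltage_def mod_add_left_eq)

lemma walk_edge_endpoints: "endpoints (walk_edge a j) = {walk_vertex a j, walk_vertex a (Suc j)}"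
proof (cases "odd j")
  case True
  then have "lift_index a (Suc j) = lift_index a j"
    by (simp add: lift_index_def offset_Suc_odd)
  with True show ?thesis
    by (simp add: walk_edge_def walk_vertex_def endpoints_lift_edge step_edge_alternating)
next
  case False
  then have "int ((lift_index a (Suc j) + Medge z M (step_edge (Suc j))) mod L)
           = int ((lift_index a j + Medge z M (step_edge j)) mod L)"
    unfolding int_check_index by (simp add: add.assoc offset_Suc_even)
  with False show ?thesis
    by (auto simp: walk_edge_def walk_vertex_def endpoints_lift_edge step_edge_alternating)
qed

lemma walk_vertex_add_cycle_length: "walk_vertex a (j + cycle_length) = walk_vertex a j"
proof -
  obtain c where c: "int (L div num_cycles) * net_voltage = int L * c"
    using dvd_net_voltage_period by blast
  have "offset (j + cycle_length) = offset j + int L * c"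
    using offset_add_periods[of j "L div num_cycles"] c by (simp add: cycle_length_def)
  then have "lift_index a (j + cycle_length) = lift_index a j"
    by (simp add: lift_index_def add.assoc[symmetric])
  moreover have "step_edge (j + cycle_length) = step_edge j"
    by (simp add: cycle_length_def step_edge_add_periods)
  moreover have "even cycle_length" using even_length by (simp add: cycle_length_def)
  ultimately show ?thesis by (simp add: walk_vertex_def)
qed

lemma lift_index_inj:
  assumes "a < num_cycles" "a' < num_cycles" "j < cycle_length" "j' < cycle_length"
    and "j mod k = j' mod k" and "lift_index a j = lift_index a' j'"
  shows "a = a' \<and> j = j'"
proof -
  have q: "j div k < L div num_cycles" "j' div k < L div num_cycles"
    using assms(3,4) by (simp_all add: cycle_length_def less_mult_imp_div_less)
  have "(int a + offset j) mod int L = (int a' + offset j') mod int L"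
    using arg_cong[OF assms(6), of int] by (simp add: int_lift_index)
  then have "(int a + int (j div k) * net_voltage + offset (j mod k)) mod int L
           = (int a' + int (j' div k) * net_voltage + offset (j mod k)) mod int L"
    using assms(5) offset_decompose[of j] offset_decompose[of j'] by (simp add: algebra_simps)
  then have "(int a + int (j div k) * net_voltage) mod int L
           = (int a' + int (j' div k) * net_voltage) mod int L"
    by (rule mod_add_right_cancel_int)
  then have "a = a' \<and> j div k = j' div k"
    using gcd_decomposition_inj[OF L_pos] assms(1,2) q by (simp add: num_cycles_def)
  with assms(5) show ?thesis by (metis div_mult_mod_eq)
qed

lemma walk_vertex_inj:
  assumes "a < num_cycles" "a' < num_cycles" "j < cycle_length" "j' < cycle_length"
    and "walk_vertex a j = walk_vertex a' j'"
  shows "a = a' \<and> j = j'"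
proof (cases "odd j")
  case True
  with assms(5) have "odd j'" and "fst (step_edge j) = fst (step_edge j')"
    and idx: "(lift_index a j + Medge z M (step_edge j)) mod L
            = (lift_index a' j' + Medge z M (step_edge j')) mod L"
    by (auto simp: walk_vertex_def split: if_splits)
  then have "j mod k = j' mod k"
    using rows_at_odd_positions_inj[of "j mod k" "j' mod k"] True length_pos
    by (simp add: step_edge_def even_mod_length)
  moreover from this have "step_edge j = step_edge j'" by (simp add: step_edge_def)
  with idx have "lift_index a j = lift_index a' j'"
    using mod_add_right_inj_less lift_index_less by metis
  ultimately show ?thesis using lift_index_inj assms(1-4) by blast
next
  case False
  with assms(5) have "even j'" and "snd (step_edge j) = snd (step_edge j')"
    and idx: "lift_index a j = lift_index a' j'"
    by (auto simp: walk_vertex_def split: if_splits)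
  then have "j mod k = j' mod k"
    using columns_at_even_positions_inj[of "j mod k" "j' mod k"] False length_pos
    by (simp add: step_edge_def even_mod_length)
  with idx show ?thesis using lift_index_inj assms(1-4) by blast
qed

lemma walk_edge_inj:
  assumes "a < num_cycles" "j < cycle_length" "j' < cycle_length" "walk_edge a j = walk_edge a j'"
  shows "j = j'"
proof -
  from assms(4) have "step_edge j = step_edge j'" "lift_index a j = lift_index a j'"
    using lift_edge_inj by (auto simp: walk_edge_def)
  then show ?thesis using lift_index_inj assms(1-3) step_edge_eq_imp_mod_eq by blast
qed

lemma walk_edge_in_lifted_edges: "walk_edge a j \<in> lifted_edges"
proof -
  have "step_edge j \<in> set es" using length_pos by (simp add: step_edge_def)
  then show ?thesis
    unfolding lifted_edges_def walk_edge_def using lift_index_less by blast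
qed

lemma lifted_cycle_is_cycle:
  assumes "a < num_cycles" "lifted_edges \<subseteq> T"
  shows "is_cycle T (lifted_cycle a)"
  unfolding lifted_cycle_def
proof (rule is_cycle_of_closed_walk)
  show "0 < cycle_length" by (rule cycle_length_pos)
  show "inj_on (walk_vertex a) {..<cycle_length}"
    using walk_vertex_inj[OF assms(1,1)] by (simp add: inj_on_def)
  show "walk_vertex a cycle_length = walk_vertex a 0"
    using walk_vertex_add_cycle_length[of a 0] by simp
  show "inj_on (walk_edge a) {..<cycle_length}"
    using walk_edge_inj[OF assms(1)] by (simp add: inj_on_def)
  show "walk_edge a ` {..<cycle_length} \<subseteq> T"
    using walk_edge_in_lifted_edges assms(2) by blast
  show "endpoints (walk_edge a j) = {walk_vertex a j, walk_vertex a (Suc j)}" for j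
    by (rule walk_edge_endpoints)
qed

lemma lifted_cycle_vertices:
  "(\<Union>e\<in>set (lifted_cycle a). endpoints e) \<subseteq> walk_vertex a ` {..<cycle_length}"
proof
  fix v assume "v \<in> (\<Union>e\<in>set (lifted_cycle a). endpoints e)"
  then obtain j where j: "j < cycle_length" and v: "v = walk_vertex a j \<or> v = walk_vertex a (Suc j)"
    by (auto simp: lifted_cycle_def walk_edge_endpoints)
  have "walk_vertex a (Suc j) = walk_vertex a ((j + 1) mod cycle_length)"
    using j walk_vertex_add_cycle_length[of a 0] by (cases "Suc j = cycle_length") auto
  moreover have "(j + 1) mod cycle_length < cycle_length" "j < cycle_length"
    using j by simp_all
  ultimately show "v \<in> walk_vertex a ` {..<cycle_length}" using v by blast
qed

lemma lifted_cycles_disjoint: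
  assumes "a < num_cycles" "a' < num_cycles" "a \<noteq> a'"
  shows "(\<Union>e\<in>set (lifted_cycle a). endpoints e) \<inter> (\<Union>e\<in>set (lifted_cycle a'). endpoints e) = {}"
  using lifted_cycle_vertices[of a] lifted_cycle_vertices[of a'] walk_vertex_inj[OF assms(1,2)] assms(3)
  by blast

lemma lifted_edge_on_walk:
  assumes "i < k" "x < L"
  obtains a j where "a < num_cycles" "j < cycle_length" "walk_edge a j = lift_edge z M L (es ! i) x"
proof -
  have "(int x - offset i) mod int L \<in> {0..<int L}" using L_pos by simp
  then have "(int x - offset i) mod int L
      \<in> (\<lambda>(a, q). (int a + int q * net_voltage) mod int L) ` ({..<num_cycles} \<times> {..<L div num_cycles})"
    using bij_betw_imp_surj_on[OF gcd_decomposition_bij[OF L_pos, of net_voltage]]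
    unfolding num_cycles_def by simp
  then obtain a q where aq: "a < num_cycles" "q < L div num_cycles"
    and eq: "(int a + int q * net_voltage) mod int L = (int x - offset i) mod int L"
    by auto
  define j where "j = i + q * k"
  have "int a + offset j = (int a + int q * net_voltage) + offset i"
    by (simp add: j_def offset_add_periods)
  then have "(int a + offset j) mod int L
           = ((int a + int q * net_voltage) mod int L + offset i) mod int L"
    by (simp only: mod_add_left_eq)
  also have "\<dots> = ((int x - offset i) mod int L + offset i) mod int L"
    by (simp only: eq)
  also have "\<dots> = int x"
    using assms(2) by (simp add: mod_add_left_eq)
  finally have "lift_index a j = x" by (simp add: lift_index_def)
  moreover have "step_edge j = es ! i" using assms(1) by (simp add: j_def step_edge_def)
  moreover have "j < cycle_length"
  proof -
    have "(q + 1) * k \<le> L div num_cycles * k" using aq(2) by (intro mult_right_mono) simp_all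
    then show ?thesis using assms(1) by (simp add: j_def cycle_length_def)
  qed
  ultimately show ?thesis using that aq(1) by (simp add: walk_edge_def)
qed

lemma lifted_edges_eq_union: "lifted_edges = (\<Union>a<num_cycles. set (lifted_cycle a))"
proof
  show "(\<Union>a<num_cycles. set (lifted_cycle a)) \<subseteq> lifted_edges"
    using walk_edge_in_lifted_edges by (auto simp: lifted_cycle_def)
  show "lifted_edges \<subseteq> (\<Union>a<num_cycles. set (lifted_cycle a))"
  proof
    fix f assume "f \<in> lifted_edges"
    then obtain i x where "i < k" "x < L" "f = lift_edge z M L (es ! i) x"
      by (auto simp: lifted_edges_def in_set_conv_nth)
    then obtain a j where "a < num_cycles" "j < cycle_length" "walk_edge a j = f"
      using lifted_edge_on_walk by metis
    then show "f \<in> (\<Union>a<num_cycles. set (lifted_cycle a))"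
      unfolding lifted_cycle_def by force
  qed
qed

lemma lifted_edges_in_md_tanner:
  assumes "E = tanner_edges H"
  shows "lifted_edges \<subseteq> tanner_edges (md_matrix H z M L)"
proof
  fix f assume "f \<in> lifted_edges"
  then obtain r c x where "(r, c) \<in> set es" "x < L" "f = lift_edge z M L (r, c) x"
    by (auto simp: lifted_edges_def)
  moreover from this have "H r c" using cycle assms by (auto simp: is_cycle_def tanner_edges_def)
  ultimately show "f \<in> tanner_edges (md_matrix H z M L)"
    using lift_edge_in_tanner_md_matrix by blast
qed

end

theorem theorem2:
  fixes H :: "nat \<Rightarrow> nat \<Rightarrow> bool" and nr nc z d L2 :: nat
    and M :: "nat \<Rightarrow> nat \<Rightarrow> nat" and es :: "(nat \<times> nat) list"
  assumes "circulant_structured H nr nc z"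
    and "1 \<le> d" and "d \<le> L2"
    and "md_mapping H nr nc z d M"
    and "is_cycle (tanner_edges H) es"
    and "\<forall>i<length es. if even i then fst (es ! i) = fst (es ! ((i + 1) mod length es))
                                   else snd (es ! i) = snd (es ! ((i + 1) mod length es))"
  shows "let k = length es;
             \<Delta> = (- (\<Sum>i<k. (-1) ^ (i + 1) * int (Medge z M (es ! i)))) mod int L2;
             \<tau> = nat (gcd (int L2) \<Delta>);
             F = {lift_edge z M L2 e a | e a. e \<in> set es \<and> a < L2}
         in \<exists>Cs :: ((nat \<times> nat) \<times> (nat \<times> nat)) list list.
              length Cs = \<tau> \<and>
              (\<forall>C\<in>set Cs. is_cycle (tanner_edges (md_matrix H z M L2)) C \<and> set C \<subseteq> F
                          \<and> length C = L2 * k div \<tau>) \<and>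
              (\<Union>C\<in>set Cs. set C) = F \<and>
              (\<forall>i<length Cs. \<forall>j<length Cs. i \<noteq> j \<longrightarrow>
                 (\<Union>e\<in>set (Cs ! i). endpoints e) \<inter> (\<Union>e\<in>set (Cs ! j). endpoints e) = {})"
proof -
  interpret lifted_alternating_cycle "tanner_edges H" es z M L2
    using assms(2,3,5,6) by unfold_locales simp_all
  have F: "{lift_edge z M L2 e a | e a. e \<in> set es \<and> a < L2} = lifted_edges"
    by (simp add: lifted_edges_def)
  have \<Delta>: "(- (\<Sum>i<k. (-1) ^ (i + 1) * int (Medge z M (es ! i)))) = net_voltage"
    by (simp add: net_voltage_eq_sum sum_negf[symmetric])
  let ?Cs = "map lifted_cycle [0..<num_cycles]"
  have "length ?Cs = num_cycles" by simp
  moreover have "\<forall>C\<in>set ?Cs. is_cycle (tanner_edges (md_matrix H z M L2)) C \<and> set C \<subseteq> lifted_edges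
                               \<and> length C = L2 * k div num_cycles"
    using lifted_cycle_is_cycle[OF _ lifted_edges_in_md_tanner] lifted_edges_eq_union
    by (auto simp: lifted_cycle_def cycle_length_eq)
  moreover have "(\<Union>C\<in>set ?Cs. set C) = lifted_edges"
    using lifted_edges_eq_union by (simp add: atLeast0LessThan)
  moreover have "\<forall>i<length ?Cs. \<forall>j<length ?Cs. i \<noteq> j \<longrightarrow>
      (\<Union>e\<in>set (?Cs ! i). endpoints e) \<inter> (\<Union>e\<in>set (?Cs ! j). endpoints e) = {}"
    using lifted_cycles_disjoint by simp
  ultimately show ?thesis
    unfolding Let_def \<Delta> F num_cycles_eq_gcd_mod[symmetric] by blast
qed

end
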